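(* Let $n\ge 2$ and let $Q\in\mathbb{R}^{n\times n}$ be an irreducible generator matrix of a continuous-time Markov chain ($q_{ij}\ge0$ for $i\ne j$, $q_{ii}=-\sum_{j\ne i}q_{ij}$). Let $B=\operatorname{diag}(\beta_i)$ with $\beta_i>0$ and $D=\operatorname{diag}(\delta_i)$ with $\delta_i\ge 0$. Let $(\boldsymbol p(t),\boldsymbol x(t))$ solve \[ \dot{\boldsymbol p}=(B-D-L(\boldsymbol x))\boldsymbol p-\operatorname{diag}(\boldsymbol p)B\boldsymbol p,\qquad \dot{\boldsymbol x}=Q^\top\boldsymbol x, \] with $\boldsymbol p(0)\in[0,1]^n$ and $\boldsymbol x(0)$ having entries in $(0,1)$ summing to $1$, where $L(\boldsymbol x)$ has entries $l_{ii}(\boldsymbol x)=\sum_{j\ne i}q_{ji}\frac{x_j}{x_i}$ and $l_{ij}(\boldsymbol x)=-q_{ji}\frac{x_j}{x_i}$ for $i\ne j$. If $p_i(t)\to 0$ as $t\to\infty$ for some $i\in\{1,\dots,n\}$, then $\boldsymbol p(t)\to\boldsymbol 0$ as $t\to\infty$. *)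

theory Defs
  imports "HOL-Analysis.Analysis"
begin

definition generator_matrix :: "real^'n^'n \<Rightarrow> bool" where
  "generator_matrix Q \<longleftrightarrow>
     (\<forall>i j. i \<noteq> j \<longrightarrow> Q $ i $ j \<ge> 0) \<and>
     (\<forall>i. Q $ i $ i = - (\<Sum>j\<in>UNIV - {i}. Q $ i $ j))"

definition irreducible_matrix :: "real^'n^'n \<Rightarrow> bool" where
  "irreducible_matrix Q \<longleftrightarrow>
     (\<forall>i j. i \<noteq> j \<longrightarrow> (i, j) \<in> {(a, b). a \<noteq> b \<and> Q $ a $ b \<noteq> 0}\<^sup>+)"

definition diag_mat :: "real^'n \<Rightarrow> real^'n^'n" where
  "diag_mat v = (\<chi> i j. if i = j then v $ i else 0)"

definition L_mat :: "real^'n^'n \<Rightarrow> real^'n \<Rightarrow> real^'n^'n" where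
  "L_mat Q x = (\<chi> i j. if i = j then (\<Sum>k\<in>UNIV - {i}. Q $ k $ i * x $ k / x $ i)
                         else - (Q $ j $ i * x $ j / x $ i))"

end

theory Submission
  imports Defs
begin

text \<open>
  Write \<open>m\<^sub>i\<^sub>j(t) = q\<^sub>j\<^sub>i x\<^sub>j(t) / x\<^sub>i(t)\<close> for the rates of \<open>L(x)\<close>. The chain \<open>x\<close> conserves its
  mass, and irreducibility bounds it away from zero uniformly in time: along an edge \<open>k \<rightarrow> i\<close> one has
  \<open>x\<^sub>i(t + 1) \<ge> q\<^sub>k\<^sub>i e\<^bsup>q\<^sub>k\<^sub>k + q\<^sub>i\<^sub>i\<^esup> x\<^sub>k(t)\<close>, and chaining these estimates along paths shows that after a
  fixed delay every coordinate dominates a fixed fraction of the total mass. Hence all rates \<open>m\<^sub>i\<^sub>j\<close>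
  are bounded, and \<open>m\<^sub>i\<^sub>k\<close> is bounded away from zero whenever \<open>q\<^sub>k\<^sub>i > 0\<close>. A barrier argument
  shows that the cube \<open>[0,1]\<^sup>n\<close> is invariant for \<open>p\<close>.

  If \<open>p\<^sub>i \<rightarrow> 0\<close> and \<open>q\<^sub>k\<^sub>i > 0\<close>, then \<open>p\<^sub>k \<rightarrow> 0\<close>: as \<open>p\<^sub>k\<close> grows at a bounded rate, a late value
  \<open>p\<^sub>k(t) \<ge> \<epsilon>\<close> keeps \<open>p\<^sub>k \<ge> \<epsilon>/2\<close> on a fixed interval before \<open>t\<close>, and the inflow \<open>m\<^sub>i\<^sub>k p\<^sub>k\<close> then
  raises \<open>p\<^sub>i\<close> by an amount incompatible with \<open>p\<^sub>i \<rightarrow> 0\<close>. Irreducibility carries the conclusion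
  from one component to all of them.
\<close>

section \<open>Differential inequalities on the half line\<close>

lemma has_vector_derivative_vec_nth:
  fixes f :: "real \<Rightarrow> real^'n"
  assumes "(f has_vector_derivative f') F"
  shows "((\<lambda>t. f t $ i) has_real_derivative f' $ i) F"
  using bounded_linear.has_vector_derivative[OF bounded_linear_vec_nth assms]
  by (simp add: has_real_derivative_iff_has_vector_derivative)

lemma at_within_atLeast_0: "0 < t \<Longrightarrow> at t within {0..} = at (t::real)"
  by (rule at_within_open_subset[where S = "{0<..}"]) auto

lemma continuous_on_atLeast_0_of_deriv:
  fixes f f' :: "real \<Rightarrow> real"
  assumes "\<And>t. 0 \<le> t \<Longrightarrow> (f has_real_derivative f' t) (at t within {0..})"
  shows "continuous_on {0..} f"
  using assms by (metis atLeast_iff continuous_on_eq_continuous_within DERIV_continuous)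

lemma increment_ge_of_deriv_ge:
  fixes f f' :: "real \<Rightarrow> real"
  assumes deriv: "\<And>t. 0 \<le> t \<Longrightarrow> (f has_real_derivative f' t) (at t within {0..})"
    and "0 \<le> a" "a \<le> b" and bound: "\<And>t. a < t \<Longrightarrow> t < b \<Longrightarrow> K \<le> f' t"
  shows "K * (b - a) \<le> f b - f a"
proof -
  have "f a - K * a \<le> f b - K * b"
  proof (rule DERIV_nonneg_imp_increasing_open[OF \<open>a \<le> b\<close>])
    fix t assume t: "a < t" "t < b"
    then have "(f has_real_derivative f' t) (at t)"
      using deriv[of t] at_within_atLeast_0[of t] \<open>0 \<le> a\<close> by simp
    then show "\<exists>y. ((\<lambda>t. f t - K * t) has_real_derivative y) (at t) \<and> 0 \<le> y"
      using bound[OF t] by (intro exI[of _ "f' t - K"]) (auto intro!: derivative_eq_intros)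
  next
    show "continuous_on {a..b} (\<lambda>t. f t - K * t)"
      using continuous_on_atLeast_0_of_deriv[OF deriv] \<open>0 \<le> a\<close>
      by (auto intro!: continuous_intros elim: continuous_on_subset)
  qed
  then show ?thesis by (simp add: algebra_simps)
qed

lemma increment_le_of_deriv_le:
  fixes f f' :: "real \<Rightarrow> real"
  assumes deriv: "\<And>t. 0 \<le> t \<Longrightarrow> (f has_real_derivative f' t) (at t within {0..})"
    and "0 \<le> a" "a \<le> b" and bound: "\<And>t. a < t \<Longrightarrow> t < b \<Longrightarrow> f' t \<le> K"
  shows "f b - f a \<le> K * (b - a)"
proof -
  have "- K * (b - a) \<le> - f b - - f a"
    by (rule increment_ge_of_deriv_ge[of _ "\<lambda>t. - f' t"])
      (use assms in \<open>auto intro!: derivative_eq_intros\<close>)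
  then show ?thesis by simp
qed

lemma first_nonpos_time:
  fixes f :: "'i::finite \<Rightarrow> real \<Rightarrow> real"
  assumes cont: "\<And>j. continuous_on {0..T} (f j)" and "0 \<le> t" "t \<le> T" "f i t \<le> 0"
  shows "\<exists>\<tau> k. 0 \<le> \<tau> \<and> \<tau> \<le> T \<and> f k \<tau> \<le> 0 \<and> (\<forall>j s. 0 \<le> s \<and> s < \<tau> \<longrightarrow> 0 < f j s)"
proof -
  define S where "S = (\<Union>j. {0..T} \<inter> f j -` {..0})"
  have "t \<in> S" using assms by (auto simp: S_def)
  have "closed S"
    unfolding S_def by (intro closed_Union finite_imageI ballI) (auto intro: continuous_closed_preimage cont)
  moreover have S_bdd: "bdd_below S" by (auto simp: S_def intro!: bdd_belowI[of _ 0])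
  ultimately have "Inf S \<in> S" using closed_contains_Inf \<open>t \<in> S\<close> by blast
  moreover have "0 < f j s" if "0 \<le> s" "s < Inf S" for j s
  proof (rule ccontr)
    assume "\<not> 0 < f j s"
    then have "s \<in> S" using that \<open>Inf S \<in> S\<close> by (auto simp: S_def not_less)
    then show False using cInf_lower[OF _ S_bdd] that by force
  qed
  ultimately show ?thesis by (auto simp: S_def)
qed

lemma positive_invariant:
  fixes f f' :: "'i::finite \<Rightarrow> real \<Rightarrow> real"
  assumes deriv: "\<And>i t. 0 \<le> t \<Longrightarrow> (f i has_real_derivative f' i t) (at t within {0..})"
    and init: "\<And>i. 0 < f i 0"
    and crossing: "\<And>i s. 0 < s \<Longrightarrow> s \<le> T \<Longrightarrow> \<forall>j. 0 \<le> f j s \<Longrightarrow> f i s = 0 \<Longrightarrow> 0 < f' i s"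
    and "0 \<le> t" "t \<le> T"
  shows "0 < f i t"
proof (rule ccontr)
  assume "\<not> 0 < f i t"
  moreover have "continuous_on {0..T} (f j)" for j
    by (rule continuous_on_subset[OF continuous_on_atLeast_0_of_deriv[OF deriv]]) auto
  ultimately obtain \<tau> k where k: "0 \<le> \<tau>" "\<tau> \<le> T" "f k \<tau> \<le> 0"
    and before: "\<And>j s. 0 \<le> s \<Longrightarrow> s < \<tau> \<Longrightarrow> 0 < f j s"
    using first_nonpos_time[of T f t i] \<open>0 \<le> t\<close> \<open>t \<le> T\<close> by (auto simp: not_less)
  have "0 < \<tau>" using k init by (metis less_eq_real_def not_le)
  have D: "DERIV (f j) \<tau> :> f' j \<tau>" for j
    using deriv[of \<tau> j] at_within_atLeast_0 \<open>0 < \<tau>\<close> by simp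
  have "0 \<le> f j \<tau>" for j
  proof (rule tendsto_lowerbound)
    show "(f j \<longlongrightarrow> f j \<tau>) (at_left \<tau>)"
      using DERIV_isCont[OF D, of j] unfolding isCont_def by (rule filterlim_mono) (simp_all add: at_le)
    show "\<forall>\<^sub>F s in at_left \<tau>. 0 \<le> f j s"
      unfolding eventually_at_left_field using \<open>0 < \<tau>\<close> before
      by (intro exI[of _ 0]) (auto intro: less_imp_le)
  qed simp
  then have "f k \<tau> = 0" "\<forall>j. 0 \<le> f j \<tau>" using k by (auto intro: order_antisym)
  then have "0 < f' k \<tau>" using crossing \<open>0 < \<tau>\<close> k by blast
  then obtain e where e: "0 < e" "\<And>h. 0 < h \<Longrightarrow> h < e \<Longrightarrow> f k (\<tau> - h) < f k \<tau>"
    using DERIV_pos_inc_left[OF D] by blast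
  define h where "h = min (e / 2) (\<tau> / 2)"
  have "f k (\<tau> - h) < 0" using e \<open>f k \<tau> = 0\<close> \<open>0 < \<tau>\<close> by (auto simp: h_def)
  moreover have "0 < f k (\<tau> - h)" using before \<open>0 < \<tau>\<close> e by (auto simp: h_def)
  ultimately show False by simp
qed

text \<open>Barrier argument: the perturbation \<open>f i t + \<epsilon> exp ((L + 1) t)\<close> can never reach zero.\<close>
lemma nonneg_invariant:
  fixes f f' :: "'i::finite \<Rightarrow> real \<Rightarrow> real"
  assumes deriv: "\<And>i t. 0 \<le> t \<Longrightarrow> (f i has_real_derivative f' i t) (at t within {0..})"
    and init: "\<And>i. 0 \<le> f i 0"
    and barrier: "\<And>i s e. 0 < s \<Longrightarrow> 0 < e \<Longrightarrow> e \<le> 1 \<Longrightarrow> \<forall>j. - e \<le> f j s \<Longrightarrow> f i s = - e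
                    \<Longrightarrow> - (L * e) \<le> f' i s"
    and "0 \<le> L" "0 \<le> t"
  shows "0 \<le> f i t"
proof (rule field_le_epsilon)
  fix \<eta> :: real assume "0 < \<eta>"
  define \<epsilon> where "\<epsilon> = min 1 \<eta> / exp ((L + 1) * t)"
  have "0 < \<epsilon>" using \<open>0 < \<eta>\<close> by (simp add: \<epsilon>_def)
  have "0 < f i t + \<epsilon> * exp ((L + 1) * t)"
  proof (rule positive_invariant[where f = "\<lambda>i s. f i s + \<epsilon> * exp ((L + 1) * s)"
        and f' = "\<lambda>i s. f' i s + \<epsilon> * (exp ((L + 1) * s) * (L + 1))" and T = t])
    fix j s assume s: "0 < s" "s \<le> t" and "\<forall>k. 0 \<le> f k s + \<epsilon> * exp ((L + 1) * s)"
      and zero: "f j s + \<epsilon> * exp ((L + 1) * s) = 0"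
    define e where "e = \<epsilon> * exp ((L + 1) * s)"
    have "0 < e" using \<open>0 < \<epsilon>\<close> by (simp add: e_def)
    have "e \<le> \<epsilon> * exp ((L + 1) * t)"
      using s \<open>0 < \<epsilon>\<close> \<open>0 \<le> L\<close> by (simp add: e_def)
    also have "\<dots> \<le> 1" using \<open>0 < \<eta>\<close> by (simp add: \<epsilon>_def)
    finally have "e \<le> 1" .
    moreover have "- e \<le> f k s" for k using \<open>\<forall>k. _\<close>[rule_format, of k] unfolding e_def by linarith
    moreover have "f j s = - e" using zero unfolding e_def by linarith
    ultimately have "- (L * e) \<le> f' j s"
      using barrier[OF \<open>0 < s\<close> \<open>0 < e\<close>] by blast
    then show "0 < f' j s + \<epsilon> * (exp ((L + 1) * s) * (L + 1))"
      using \<open>0 < e\<close> by (simp add: e_def algebra_simps)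
  qed (use deriv init \<open>0 < \<epsilon>\<close> \<open>0 \<le> t\<close> in \<open>auto intro!: derivative_eq_intros add_nonneg_pos\<close>)
  moreover have "\<epsilon> * exp ((L + 1) * t) \<le> \<eta>" by (simp add: \<epsilon>_def)
  ultimately show "0 \<le> f i t + \<eta>" by linarith
qed

lemma half_value_before_of_deriv_le:
  fixes v v' :: "real \<Rightarrow> real"
  assumes deriv: "\<And>t. 0 \<le> t \<Longrightarrow> (v has_real_derivative v' t) (at t within {0..})"
    and growth: "\<And>t. 0 \<le> t \<Longrightarrow> v' t \<le> B" and "0 < B"
    and "\<epsilon> \<le> v t" "0 \<le> s" "s \<le> t" "t - s \<le> \<epsilon> / (2 * B)"
  shows "\<epsilon> / 2 \<le> v s"
proof -
  have "v t - v s \<le> B * (t - s)" by (rule increment_le_of_deriv_le[OF deriv]) (use assms in auto)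
  also have "\<dots> \<le> \<epsilon> / 2" using assms by (simp add: field_simps)
  finally show ?thesis using \<open>\<epsilon> \<le> v t\<close> by linarith
qed

lemma tendsto_zero_of_forcing:
  fixes u v u' v' :: "real \<Rightarrow> real"
  assumes u_deriv: "\<And>t. 0 \<le> t \<Longrightarrow> (u has_real_derivative u' t) (at t within {0..})"
    and v_deriv: "\<And>t. 0 \<le> t \<Longrightarrow> (v has_real_derivative v' t) (at t within {0..})"
    and u_nonneg: "\<And>t. 0 \<le> t \<Longrightarrow> 0 \<le> u t" and v_nonneg: "\<And>t. 0 \<le> t \<Longrightarrow> 0 \<le> v t"
    and forcing: "\<And>t. 0 \<le> t \<Longrightarrow> \<gamma> * v t - A * u t \<le> u' t"
    and v_growth: "\<And>t. 0 \<le> t \<Longrightarrow> v' t \<le> B"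
    and "0 < \<gamma>" "0 \<le> A" "0 < B"
    and u_lim: "(u \<longlongrightarrow> 0) at_top"
  shows "(v \<longlongrightarrow> 0) at_top"
  unfolding tendsto_iff
proof (intro allI impI)
  fix \<epsilon> :: real assume "0 < \<epsilon>"
  define h where "h = \<epsilon> / (2 * B)"
  define \<eta> where "\<eta> = \<gamma> * \<epsilon> * h / 4 / (1 + A * h)"
  have "0 < h" using \<open>0 < \<epsilon>\<close> \<open>0 < B\<close> by (simp add: h_def)
  have "0 < \<eta>" using \<open>0 < h\<close> \<open>0 < \<gamma>\<close> \<open>0 < \<epsilon>\<close> \<open>0 \<le> A\<close>
    by (simp add: \<eta>_def add_pos_nonneg)
  obtain T where T: "\<And>t. T \<le> t \<Longrightarrow> \<bar>u t\<bar> < \<eta>"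
    using u_lim \<open>0 < \<eta>\<close> unfolding tendsto_iff eventually_at_top_linorder by fastforce
  have "v t < \<epsilon>" if t: "max T 0 + h \<le> t" for t
  proof (rule ccontr)
    assume "\<not> v t < \<epsilon>"
    define s\<^sub>0 where "s\<^sub>0 = t - h"
    have s\<^sub>0: "0 \<le> s\<^sub>0" "T \<le> s\<^sub>0" "s\<^sub>0 \<le> t" using t \<open>0 < h\<close> by (auto simp: s\<^sub>0_def)
    have v_large: "\<epsilon> / 2 \<le> v s" if s: "s\<^sub>0 < s" "s < t" for s
      by (rule half_value_before_of_deriv_le[where t = t, OF v_deriv v_growth \<open>0 < B\<close>])
        (use \<open>\<not> v t < \<epsilon>\<close> s s\<^sub>0 in \<open>auto simp: s\<^sub>0_def h_def\<close>)
    \<comment> \<open>The inflow \<open>\<gamma> v \<ge> \<gamma> \<epsilon> / 2\<close> raises \<open>u\<close> by more than \<open>\<eta>\<close> over \<open>[s\<^sub>0, t]\<close>, yet \<open>0 \<le> u < \<eta>\<close> there.\<close>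
    have "(\<gamma> * (\<epsilon> / 2) - A * \<eta>) * (t - s\<^sub>0) \<le> u t - u s\<^sub>0"
    proof (intro increment_ge_of_deriv_ge[OF u_deriv s\<^sub>0(1,3)])
      fix s assume s: "s\<^sub>0 < s" "s < t"
      have "\<gamma> * (\<epsilon> / 2) \<le> \<gamma> * v s" using v_large[OF s] \<open>0 < \<gamma>\<close> by simp
      moreover have "A * u s \<le> A * \<eta>" using T[of s] s s\<^sub>0 \<open>0 \<le> A\<close> by (intro mult_left_mono) auto
      ultimately show "\<gamma> * (\<epsilon> / 2) - A * \<eta> \<le> u' s" using forcing[of s] s s\<^sub>0 by linarith
    qed
    moreover have "u t < \<eta>" "0 \<le> u s\<^sub>0" using T[of t] s\<^sub>0 u_nonneg by auto
    ultimately have "\<gamma> * \<epsilon> * h / 2 < \<eta> * (1 + A * h)" by (simp add: s\<^sub>0_def algebra_simps)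
    also have "\<dots> = \<gamma> * \<epsilon> * h / 4"
    proof -
      have "0 < 1 + A * h" using \<open>0 < h\<close> \<open>0 \<le> A\<close> by (intro add_pos_nonneg) auto
      then show ?thesis by (simp add: \<eta>_def del: divide_divide_eq_left)
    qed
    finally show False using \<open>0 < h\<close> \<open>0 < \<gamma>\<close> \<open>0 < \<epsilon>\<close> by simp
  qed
  then show "\<forall>\<^sub>F t in at_top. dist (v t) 0 < \<epsilon>"
    unfolding eventually_at_top_linorder using v_nonneg \<open>0 < h\<close>
    by (intro exI[of _ "max T 0 + h"]) (auto simp: le_max_iff_disj)
qed

lemma exp_rescale_le:
  fixes a s t y z :: real
  assumes "exp (- a * t) * y \<le> exp (- a * s) * z"
  shows "exp (a * (s - t)) * y \<le> z"
  using assms by (simp add: exp_minus exp_diff field_simps)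

section \<open>The Kolmogorov forward equation\<close>

lemma generator_matrix_offdiag_nonneg: "generator_matrix Q \<Longrightarrow> i \<noteq> j \<Longrightarrow> 0 \<le> Q $ i $ j"
  by (simp add: generator_matrix_def)

lemma generator_matrix_diag_nonpos: "generator_matrix Q \<Longrightarrow> Q $ i $ i \<le> 0"
  using sum_nonneg[of "UNIV - {i}" "\<lambda>j. Q $ i $ j"] unfolding generator_matrix_def by force

lemma generator_matrix_row_sum: "generator_matrix Q \<Longrightarrow> (\<Sum>j\<in>UNIV. Q $ i $ j) = 0"
  unfolding generator_matrix_def by (simp add: sum.remove[of UNIV i])

locale forward_equation =
  fixes Q :: "real^'n^'n" and x :: "real \<Rightarrow> real^'n"
  assumes generator: "generator_matrix Q"
    and x_ode: "\<And>t. 0 \<le> t \<Longrightarrow> (x has_vector_derivative (transpose Q *v x t)) (at t within {0..})"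
    and x_init_nonneg: "\<And>i. 0 \<le> x 0 $ i"
begin

lemma x_deriv:
  "0 \<le> t \<Longrightarrow> ((\<lambda>t. x t $ i) has_real_derivative (\<Sum>j\<in>UNIV. Q $ j $ i * x t $ j)) (at t within {0..})"
  using has_vector_derivative_vec_nth[OF x_ode, of t i]
  by (simp add: matrix_vector_mult_def transpose_def)

lemma x_nonneg:
  assumes "0 \<le> t" shows "0 \<le> x t $ i"
proof (rule nonneg_invariant[OF x_deriv x_init_nonneg _ _ assms])
  show "0 \<le> (\<Sum>k\<in>UNIV. \<Sum>j\<in>UNIV. \<bar>Q $ j $ k\<bar>)" by (simp add: sum_nonneg)
next
  fix i s e assume "0 < e" and touch: "\<forall>j. - e \<le> x s $ j" "x s $ i = - e"
  have "- (\<bar>Q $ j $ i\<bar> * e) \<le> Q $ j $ i * x s $ j" for j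
  proof (cases "j = i")
    case True
    then show ?thesis using touch(2) mult_right_mono[OF abs_ge_self \<open>0 < e\<close>[THEN less_imp_le]] by simp
  next
    case False
    then have "0 \<le> Q $ j $ i" using generator_matrix_offdiag_nonneg[OF generator] by simp
    then show ?thesis using touch(1) mult_left_mono[of "- e" "x s $ j" "Q $ j $ i"] by simp
  qed
  then have "(\<Sum>j\<in>UNIV. - (\<bar>Q $ j $ i\<bar> * e)) \<le> (\<Sum>j\<in>UNIV. Q $ j $ i * x s $ j)"
    by (rule sum_mono)
  moreover have "(\<Sum>j\<in>UNIV. \<bar>Q $ j $ i\<bar>) * e \<le> (\<Sum>k\<in>UNIV. \<Sum>j\<in>UNIV. \<bar>Q $ j $ k\<bar>) * e"
    using \<open>0 < e\<close> by (intro mult_right_mono member_le_sum) (auto intro: sum_nonneg)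
  moreover have "(\<Sum>j\<in>UNIV. - (\<bar>Q $ j $ i\<bar> * e)) = - ((\<Sum>j\<in>UNIV. \<bar>Q $ j $ i\<bar>) * e)"
    by (simp add: sum_negf sum_distrib_right)
  ultimately show "- ((\<Sum>k\<in>UNIV. \<Sum>j\<in>UNIV. \<bar>Q $ j $ k\<bar>) * e) \<le> (\<Sum>j\<in>UNIV. Q $ j $ i * x s $ j)"
    by linarith
qed

lemma x_sum_eq:
  assumes "0 \<le> t" shows "(\<Sum>i\<in>UNIV. x t $ i) = (\<Sum>i\<in>UNIV. x 0 $ i)"
proof -
  have deriv: "((\<lambda>t. \<Sum>i\<in>UNIV. x t $ i) has_real_derivative 0) (at s within {0..})" if "0 \<le> s" for s
  proof -
    have "(\<Sum>i\<in>UNIV. \<Sum>j\<in>UNIV. Q $ j $ i * x s $ j) = (\<Sum>j\<in>UNIV. x s $ j * (\<Sum>i\<in>UNIV. Q $ j $ i))"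
      by (subst sum.swap) (simp add: sum_distrib_left mult.commute)
    also have "\<dots> = 0" by (simp add: generator_matrix_row_sum[OF generator])
    finally show ?thesis using x_deriv[OF that] by (auto intro!: derivative_eq_intros)
  qed
  show ?thesis
    using increment_ge_of_deriv_ge[OF deriv, of 0 t 0] increment_le_of_deriv_le[OF deriv, of 0 t 0] assms
    by simp
qed

lemma x_le_sum:
  assumes "0 \<le> t" shows "x t $ i \<le> (\<Sum>j\<in>UNIV. x 0 $ j)"
proof -
  have "x t $ i \<le> (\<Sum>j\<in>UNIV. x t $ j)" by (rule member_le_sum) (use x_nonneg assms in auto)
  then show ?thesis using x_sum_eq[OF assms] by simp
qed

lemma x_scaled_deriv:
  assumes "0 \<le> t"
  shows "((\<lambda>s. exp (- Q $ i $ i * s) * x s $ i) has_real_derivative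
           exp (- Q $ i $ i * t) * (\<Sum>j\<in>UNIV - {i}. Q $ j $ i * x t $ j)) (at t within {0..})"
proof -
  have "(\<Sum>j\<in>UNIV. Q $ j $ i * x t $ j) = Q $ i $ i * x t $ i + (\<Sum>j\<in>UNIV - {i}. Q $ j $ i * x t $ j)"
    by (simp add: sum.remove[of UNIV i])
  then show ?thesis
    using x_deriv[OF assms, of i] by (auto intro!: derivative_eq_intros simp: algebra_simps)
qed

lemma x_ge_exp_diag:
  assumes "0 \<le> s" "s \<le> t" shows "exp (Q $ i $ i * (t - s)) * x s $ i \<le> x t $ i"
proof -
  have "0 * (t - s) \<le> exp (- Q $ i $ i * t) * x t $ i - exp (- Q $ i $ i * s) * x s $ i"
  proof (rule increment_ge_of_deriv_ge[OF x_scaled_deriv assms])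
    fix r assume "s < r"
    then show "0 \<le> exp (- Q $ i $ i * r) * (\<Sum>j\<in>UNIV - {i}. Q $ j $ i * x r $ j)"
      using assms generator_matrix_offdiag_nonneg[OF generator] x_nonneg
      by (auto intro!: sum_nonneg mult_nonneg_nonneg)
  qed
  then show ?thesis by (intro exp_rescale_le) simp
qed

lemma x_transfer:
  assumes "0 \<le> t" "k \<noteq> i" shows "Q $ k $ i * exp (Q $ k $ k + Q $ i $ i) * x t $ k \<le> x (t + 1) $ i"
proof -
  define c where "c = Q $ k $ i * exp (Q $ k $ k) * x t $ k"
  have "0 \<le> Q $ k $ i" using generator_matrix_offdiag_nonneg[OF generator assms(2)] .
  have "exp (- Q $ i $ i * t) * c * (t + 1 - t) \<le>
      exp (- Q $ i $ i * (t + 1)) * x (t + 1) $ i - exp (- Q $ i $ i * t) * x t $ i"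
  proof (rule increment_ge_of_deriv_ge[OF x_scaled_deriv \<open>0 \<le> t\<close>])
    show "t \<le> t + 1" by simp
  next
    fix s assume s: "t < s" "s < t + 1"
    have "exp (Q $ k $ k) * x t $ k \<le> exp (Q $ k $ k * (s - t)) * x t $ k"
      using s generator_matrix_diag_nonpos[OF generator, of k] x_nonneg[OF assms(1), of k]
      by (intro mult_right_mono) (auto simp: mult_le_cancel_left1)
    also have "\<dots> \<le> x s $ k" using s \<open>0 \<le> t\<close> by (intro x_ge_exp_diag) auto
    finally have "c \<le> Q $ k $ i * x s $ k"
      using \<open>0 \<le> Q $ k $ i\<close> by (simp add: c_def mult.assoc mult_left_mono)
    also have "\<dots> \<le> (\<Sum>j\<in>UNIV - {i}. Q $ j $ i * x s $ j)"
      using assms s generator_matrix_offdiag_nonneg[OF generator] x_nonneg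
      by (intro member_le_sum) auto
    finally have "c \<le> (\<Sum>j\<in>UNIV - {i}. Q $ j $ i * x s $ j)" .
    moreover have "exp (- Q $ i $ i * t) \<le> exp (- Q $ i $ i * s)"
      using s generator_matrix_diag_nonpos[OF generator, of i] by (simp add: mult_left_mono_neg)
    moreover have "0 \<le> c"
      using \<open>0 \<le> Q $ k $ i\<close> x_nonneg[OF assms(1), of k] by (simp add: c_def)
    ultimately show "exp (- Q $ i $ i * t) * c \<le> exp (- Q $ i $ i * s) * (\<Sum>j\<in>UNIV - {i}. Q $ j $ i * x s $ j)"
      by (intro mult_mono) auto
  qed
  moreover have "0 \<le> exp (- Q $ i $ i * t) * x t $ i" using x_nonneg[OF assms(1)] by simp
  ultimately have "exp (- Q $ i $ i * t) * c \<le> exp (- Q $ i $ i * (t + 1)) * x (t + 1) $ i" by simp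
  then have "exp (Q $ i $ i * (t + 1 - t)) * c \<le> x (t + 1) $ i" by (rule exp_rescale_le)
  then show ?thesis by (simp add: c_def exp_add mult_ac)
qed

lemma x_reach:
  assumes "(k, i) \<in> {(k, i). k \<noteq> i \<and> Q $ k $ i \<noteq> 0}\<^sup>+"
  shows "\<exists>m::nat. \<exists>c>0. \<forall>t\<ge>0. c * x t $ k \<le> x (t + real m) $ i"
  using assms
proof (induction rule: trancl_induct)
  case (base i)
  then have "0 < Q $ k $ i" "k \<noteq> i" using generator_matrix_offdiag_nonneg[OF generator, of k i] by auto
  then show ?case
    using x_transfer by (intro exI[of _ 1] exI[of _ "Q $ k $ i * exp (Q $ k $ k + Q $ i $ i)"]) auto
next
  case (step j i)
  then obtain m c where "0 < c" and reach_j: "\<And>t. 0 \<le> t \<Longrightarrow> c * x t $ k \<le> x (t + real m) $ j"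
    by blast
  from step have "0 < Q $ j $ i" "j \<noteq> i" using generator_matrix_offdiag_nonneg[OF generator, of j i] by auto
  define d where "d = Q $ j $ i * exp (Q $ j $ j + Q $ i $ i)"
  have "0 < d" using \<open>0 < Q $ j $ i\<close> by (simp add: d_def)
  have "d * c * x t $ k \<le> x (t + real (Suc m)) $ i" if "0 \<le> t" for t
  proof -
    have "d * (c * x t $ k) \<le> d * x (t + real m) $ j"
      using reach_j[OF that] \<open>0 < d\<close> by (simp add: mult_left_mono)
    also have "\<dots> \<le> x (t + real m + 1) $ i"
      using x_transfer[of "t + real m" j i] that \<open>j \<noteq> i\<close> by (simp add: d_def)
    finally show ?thesis by (simp add: mult.assoc add_ac)
  qed
  then show ?case using \<open>0 < c\<close> \<open>0 < d\<close> by (intro exI[of _ "Suc m"] exI[of _ "d * c"]) auto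
qed

end

definition migration_rate :: "real^'n^'n \<Rightarrow> real^'n \<Rightarrow> 'n \<Rightarrow> 'n \<Rightarrow> real" where
  "migration_rate Q x i j = Q $ j $ i * x $ j / x $ i"

locale irreducible_forward_equation = forward_equation Q x for Q :: "real^'n^'n" and x +
  assumes irreducible: "irreducible_matrix Q" and x_init_pos: "\<And>i. 0 < x 0 $ i"
begin

lemma x_uniform_reach:
  shows "\<exists>M\<ge>0. \<exists>c>0. \<forall>k i t. 0 \<le> t \<longrightarrow> c * x t $ k \<le> x (t + M) $ i"
proof -
  have "\<exists>m::nat. \<exists>c>0. \<forall>t\<ge>0. c * x t $ k \<le> x (t + real m) $ i" for k i
  proof (cases "k = i")
    case True then show ?thesis by (intro exI[of _ 0] exI[of _ 1]) auto
  next
    case False then show ?thesis using irreducible x_reach unfolding irreducible_matrix_def by blast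
  qed
  then obtain m c where c_pos: "\<And>k i. 0 < c k i"
    and reach: "\<And>k i t. 0 \<le> t \<Longrightarrow> c k i * x t $ k \<le> x (t + real (m k i)) $ i"
    by metis
  define M where "M = real (Max (range (\<lambda>(k, i). m k i)))"
  have m_le: "real (m k i) \<le> M" for k i
    unfolding M_def by (intro of_nat_mono Max_ge) (auto intro: rev_image_eqI[of "(k, i)"])
  \<comment> \<open>Pad every delay \<open>m k i\<close> up to the common delay \<open>M\<close>, losing at most the decay factor of \<open>x i\<close>.\<close>
  define d where "d k i = c k i * exp (Q $ i $ i * (M - m k i))" for k i
  have reach_M: "d k i * x t $ k \<le> x (t + M) $ i" if "0 \<le> t" for k i t
  proof -
    have "d k i * x t $ k = exp (Q $ i $ i * ((t + M) - (t + m k i))) * (c k i * x t $ k)"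
      by (simp add: d_def mult_ac)
    also have "\<dots> \<le> exp (Q $ i $ i * ((t + M) - (t + m k i))) * x (t + m k i) $ i"
      using reach[OF that] by (simp add: mult_left_mono)
    also have "\<dots> \<le> x (t + M) $ i" by (rule x_ge_exp_diag) (use that m_le in auto)
    finally show ?thesis .
  qed
  define C where "C = Min (range (\<lambda>(k, i). d k i))"
  have "0 < C" by (auto simp: C_def d_def c_pos)
  have "C * x t $ k \<le> x (t + M) $ i" if "0 \<le> t" for k i t
  proof -
    have "C \<le> d k i" unfolding C_def by (rule Min_le) (auto intro: rev_image_eqI[of "(k, i)"])
    then have "C * x t $ k \<le> d k i * x t $ k" using x_nonneg[OF that] by (rule mult_right_mono)
    also have "\<dots> \<le> x (t + M) $ i" by (rule reach_M[OF that])
    finally show ?thesis .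
  qed
  moreover have "0 \<le> M" by (simp add: M_def)
  ultimately show ?thesis using \<open>0 < C\<close> by blast
qed

lemma x_lower_bound: "\<exists>c>0. \<forall>t\<ge>0. \<forall>i. c \<le> x t $ i"
proof -
  obtain M C where "0 \<le> M" "0 < C" and reach: "\<And>k i t. 0 \<le> t \<Longrightarrow> C * x t $ k \<le> x (t + M) $ i"
    using x_uniform_reach by blast
  define S where "S = (\<Sum>i\<in>UNIV. x 0 $ i)"
  have "0 < S" unfolding S_def using x_init_pos by (simp add: sum_pos)
  define c where "c = min (Min (range (\<lambda>i. exp (Q $ i $ i * M) * x 0 $ i))) (C * S / CARD('n))"
  have "0 < c" using x_init_pos \<open>0 < C\<close> \<open>0 < S\<close> by (simp add: c_def)
  have "c \<le> x t $ i" if "0 \<le> t" for t i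
  proof (cases "t \<le> M")
    case True
    have "c \<le> exp (Q $ i $ i * M) * x 0 $ i" by (auto simp: c_def intro: min.coboundedI1 Min_le)
    also have "\<dots> \<le> exp (Q $ i $ i * (t - 0)) * x 0 $ i"
      using True generator_matrix_diag_nonpos[OF generator, of i] x_init_pos[of i]
      by (simp add: mult_left_mono_neg)
    also have "\<dots> \<le> x t $ i" by (rule x_ge_exp_diag) (use that in auto)
    finally show ?thesis .
  next
    case False
    then have "0 \<le> t - M" by simp
    \<comment> \<open>\<open>x i t\<close> dominates \<open>C x k (t - M)\<close> for every \<open>k\<close>, hence \<open>C / n\<close> times the conserved mass.\<close>
    have "C * S = (\<Sum>k\<in>UNIV. C * x (t - M) $ k)"
      unfolding S_def x_sum_eq[OF \<open>0 \<le> t - M\<close>, symmetric] by (simp add: sum_distrib_left)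
    also have "\<dots> \<le> (\<Sum>k\<in>(UNIV::'n set). x t $ i)"
      using reach[OF \<open>0 \<le> t - M\<close>, of _ i] by (intro sum_mono) simp
    also have "\<dots> = CARD('n) * x t $ i" by simp
    finally have "C * S / CARD('n) \<le> x t $ i" by (simp add: field_simps)
    then show ?thesis by (simp add: c_def)
  qed
  then show ?thesis using \<open>0 < c\<close> by blast
qed

lemma x_pos: "0 \<le> t \<Longrightarrow> 0 < x t $ i"
  using x_lower_bound by (meson less_le_trans)

lemma migration_rate_nonneg: "0 \<le> t \<Longrightarrow> i \<noteq> j \<Longrightarrow> 0 \<le> migration_rate Q (x t) i j"
  using generator_matrix_offdiag_nonneg[OF generator, of j i] x_nonneg[of t j] x_pos[of t i]
  by (simp add: migration_rate_def)

lemma migration_rate_bounded: "\<exists>K. \<forall>t\<ge>0. \<forall>i j. i \<noteq> j \<longrightarrow> migration_rate Q (x t) i j \<le> K"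
proof -
  obtain c where "0 < c" and x_ge: "\<And>t i. 0 \<le> t \<Longrightarrow> c \<le> x t $ i" using x_lower_bound by blast
  define S where "S = (\<Sum>j\<in>UNIV. x 0 $ j)"
  have "0 \<le> S" using x_init_nonneg by (simp add: S_def sum_nonneg)
  show ?thesis
  proof (intro exI[of _ "Max (range (\<lambda>(j, i). Q $ j $ i)) * S / c"] allI impI)
    fix t :: real and i j :: 'n assume "0 \<le> t" "i \<noteq> j"
    then have "0 \<le> Q $ j $ i" using generator_matrix_offdiag_nonneg[OF generator] by simp
    have "migration_rate Q (x t) i j \<le> Q $ j $ i * S / x t $ i"
      unfolding migration_rate_def S_def using \<open>0 \<le> Q $ j $ i\<close> x_le_sum x_pos \<open>0 \<le> t\<close>
      by (intro divide_right_mono mult_left_mono) (auto intro: less_imp_le)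
    also have "\<dots> \<le> Q $ j $ i * S / c"
      using \<open>0 \<le> Q $ j $ i\<close> \<open>0 \<le> S\<close> \<open>0 < c\<close> x_ge[OF \<open>0 \<le> t\<close>] x_pos[OF \<open>0 \<le> t\<close>]
      by (intro divide_left_mono) auto
    also have "\<dots> \<le> Max (range (\<lambda>(j, i). Q $ j $ i)) * S / c"
      using \<open>0 \<le> S\<close> \<open>0 < c\<close>
      by (intro divide_right_mono mult_right_mono Max_ge) (auto intro: rev_image_eqI[of "(j, i)"])
    finally show "migration_rate Q (x t) i j \<le> Max (range (\<lambda>(j, i). Q $ j $ i)) * S / c" .
  qed
qed

lemma migration_rate_lower_bound:
  assumes "k \<noteq> i" "Q $ k $ i \<noteq> 0"
  shows "\<exists>\<gamma>>0. \<forall>t\<ge>0. \<gamma> \<le> migration_rate Q (x t) i k"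
proof -
  obtain c where "0 < c" and x_ge: "\<And>t i. 0 \<le> t \<Longrightarrow> c \<le> x t $ i" using x_lower_bound by blast
  define S where "S = (\<Sum>j\<in>UNIV. x 0 $ j)"
  have "0 < Q $ k $ i" using assms generator_matrix_offdiag_nonneg[OF generator, of k i] by simp
  show ?thesis
  proof (intro exI[of _ "Q $ k $ i * (c / S)"] conjI allI impI)
    have "0 < S" using x_init_pos by (simp add: S_def sum_pos)
    then show "0 < Q $ k $ i * (c / S)" using \<open>0 < Q $ k $ i\<close> \<open>0 < c\<close> by simp
    fix t :: real assume "0 \<le> t"
    have "c / S \<le> x t $ k / x t $ i"
      using \<open>0 < c\<close> x_ge[OF \<open>0 \<le> t\<close>] x_pos[OF \<open>0 \<le> t\<close>] x_le_sum[OF \<open>0 \<le> t\<close>]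
      by (intro frac_le) (auto simp: S_def less_imp_le)
    then have "Q $ k $ i * (c / S) \<le> Q $ k $ i * (x t $ k / x t $ i)"
      using \<open>0 < Q $ k $ i\<close> by (intro mult_left_mono) auto
    then show "Q $ k $ i * (c / S) \<le> migration_rate Q (x t) i k" by (simp add: migration_rate_def)
  qed
qed

end

section \<open>The SIS system with migration\<close>

lemma L_mat_mult_vec_nth:
  "(L_mat Q x *v v) $ i = (\<Sum>j\<in>UNIV - {i}. migration_rate Q x i j * (v $ i - v $ j))"
proof -
  have "(L_mat Q x *v v) $ i = L_mat Q x $ i $ i * v $ i + (\<Sum>j\<in>UNIV - {i}. L_mat Q x $ i $ j * v $ j)"
    by (simp add: matrix_vector_mult_def sum.remove[of UNIV i])
  then show ?thesis
    by (simp add: L_mat_def migration_rate_def sum_distrib_right right_diff_distrib sum_subtractf sum_negf)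
qed

lemma diag_mat_mult_vec_nth: "(diag_mat w *v v) $ i = w $ i * v $ i"
  unfolding diag_mat_def matrix_vector_mult_def
  by (simp add: if_distrib[of "\<lambda>a. a * _"] cong: if_cong)

lemma diag_mat_mult_diag_mat: "diag_mat a ** diag_mat b = diag_mat (\<chi> i. a $ i * b $ i)"
  unfolding diag_mat_def matrix_matrix_mult_def
  by (auto simp: vec_eq_iff if_distrib[of "\<lambda>a. a * _"] cong: if_cong)

definition sis_field :: "real^'n \<Rightarrow> real^'n \<Rightarrow> ('n \<Rightarrow> 'n \<Rightarrow> real) \<Rightarrow> real^'n \<Rightarrow> 'n \<Rightarrow> real" where
  "sis_field \<beta> \<delta> M v i = (\<beta> $ i - \<delta> $ i - \<beta> $ i * v $ i) * v $ i + (\<Sum>j\<in>UNIV - {i}. M i j * (v $ j - v $ i))"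

lemma sis_field_L_mat:
  "((diag_mat \<beta> - diag_mat \<delta> - L_mat Q x) *v v - (diag_mat v ** diag_mat \<beta>) *v v) $ i
     = sis_field \<beta> \<delta> (migration_rate Q x) v i"
proof -
  have "(\<Sum>j\<in>UNIV - {i}. migration_rate Q x i j * (v $ j - v $ i))
      = - (\<Sum>j\<in>UNIV - {i}. migration_rate Q x i j * (v $ i - v $ j))"
    by (simp add: sum_negf[symmetric] right_diff_distrib)
  then show ?thesis
    by (simp add: sis_field_def matrix_vector_mult_diff_rdistrib diag_mat_mult_vec_nth
        diag_mat_mult_diag_mat L_mat_mult_vec_nth algebra_simps)
qed

locale sis_system =
  fixes \<beta> \<delta> :: "real^'n" and M :: "real \<Rightarrow> 'n \<Rightarrow> 'n \<Rightarrow> real" and K :: real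
    and p :: "real \<Rightarrow> real^'n"
  assumes beta_pos: "\<And>i. 0 < \<beta> $ i" and delta_nonneg: "\<And>i. 0 \<le> \<delta> $ i"
    and M_nonneg: "\<And>t i j. 0 \<le> t \<Longrightarrow> i \<noteq> j \<Longrightarrow> 0 \<le> M t i j"
    and M_le: "\<And>t i j. 0 \<le> t \<Longrightarrow> i \<noteq> j \<Longrightarrow> M t i j \<le> K"
    and p_deriv: "\<And>i t. 0 \<le> t \<Longrightarrow>
          ((\<lambda>t. p t $ i) has_real_derivative sis_field \<beta> \<delta> (M t) (p t) i) (at t within {0..})"
    and p_init_nonneg: "\<And>i. 0 \<le> p 0 $ i" and p_init_le_1: "\<And>i. p 0 $ i \<le> 1"
begin

lemma p_nonneg:
  assumes "0 \<le> t" shows "0 \<le> p t $ i"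
proof (rule nonneg_invariant[OF p_deriv p_init_nonneg _ _ assms])
  show "0 \<le> 2 * (\<Sum>j\<in>UNIV. \<beta> $ j)" using beta_pos by (simp add: sum_nonneg less_imp_le)
next
  fix i s e assume "0 < s" "0 < e" "e \<le> 1" and touch: "\<forall>j. - e \<le> p s $ j" "p s $ i = - e"
  have "0 \<le> p s $ j - p s $ i" for j using touch(1)[rule_format, of j] touch(2) by simp
  then have "0 \<le> (\<Sum>j\<in>UNIV - {i}. M s i j * (p s $ j - p s $ i))"
    using M_nonneg \<open>0 < s\<close> by (intro sum_nonneg mult_nonneg_nonneg) auto
  moreover have "- (2 * \<beta> $ i * e) \<le> (\<beta> $ i - \<delta> $ i - \<beta> $ i * p s $ i) * p s $ i"
  proof -
    have "\<beta> $ i * e * e \<le> \<beta> $ i * e"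
      using \<open>0 < e\<close> \<open>e \<le> 1\<close> beta_pos[of i] by (simp add: mult_left_le)
    moreover have "0 \<le> \<delta> $ i * e" using delta_nonneg[of i] \<open>0 < e\<close> by simp
    moreover have "(\<beta> $ i - \<delta> $ i - \<beta> $ i * p s $ i) * p s $ i
        = - (\<beta> $ i * e) + \<delta> $ i * e - \<beta> $ i * e * e"
      using touch(2) by (simp add: algebra_simps)
    ultimately show ?thesis by linarith
  qed
  moreover have "2 * \<beta> $ i * e \<le> 2 * (\<Sum>j\<in>UNIV. \<beta> $ j) * e"
    using beta_pos \<open>0 < e\<close> by (intro mult_right_mono mult_left_mono member_le_sum) (auto intro: less_imp_le)
  ultimately show "- (2 * (\<Sum>j\<in>UNIV. \<beta> $ j) * e) \<le> sis_field \<beta> \<delta> (M s) (p s) i"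
    unfolding sis_field_def by linarith
qed

lemma p_le_1:
  assumes "0 \<le> t" shows "p t $ i \<le> 1"
proof -
  have "0 \<le> 1 - p t $ i"
  proof (rule nonneg_invariant[where f = "\<lambda>i t. 1 - p t $ i" and L = 0, OF _ _ _ order_refl assms])
    show "((\<lambda>t. 1 - p t $ i) has_real_derivative - sis_field \<beta> \<delta> (M t) (p t) i) (at t within {0..})"
      if "0 \<le> t" for i t
      using p_deriv[OF that] by (auto intro!: derivative_eq_intros)
  next
    fix i s e assume "0 < s" "0 < e" and touch: "\<forall>j. - e \<le> 1 - p s $ j" "1 - p s $ i = - e"
    have p_i: "p s $ i = 1 + e" using touch(2) by simp
    have "p s $ j - p s $ i \<le> 0" for j using touch(1)[rule_format, of j] p_i by simp
    then have "(\<Sum>j\<in>UNIV - {i}. M s i j * (p s $ j - p s $ i)) \<le> 0"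
      using M_nonneg \<open>0 < s\<close> by (intro sum_nonpos mult_nonneg_nonpos) auto
    moreover have "(\<beta> $ i - \<delta> $ i - \<beta> $ i * p s $ i) * p s $ i = - ((\<delta> $ i + \<beta> $ i * e) * (1 + e))"
      unfolding p_i by (simp add: algebra_simps)
    moreover have "0 \<le> (\<delta> $ i + \<beta> $ i * e) * (1 + e)"
      using delta_nonneg[of i] beta_pos[of i] \<open>0 < e\<close> by simp
    ultimately show "- (0 * e) \<le> - sis_field \<beta> \<delta> (M s) (p s) i"
      unfolding sis_field_def by linarith
  qed (use p_init_le_1 in simp)
  then show ?thesis by simp
qed

lemma sis_field_le:
  assumes "0 \<le> t" shows "sis_field \<beta> \<delta> (M t) (p t) k \<le> \<beta> $ k + CARD('n) * \<bar>K\<bar>"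
proof -
  have p: "0 \<le> p t $ j" "p t $ j \<le> 1" for j using p_nonneg p_le_1 assms by auto
  have "(\<beta> $ k - \<delta> $ k - \<beta> $ k * p t $ k) * p t $ k \<le> \<beta> $ k * p t $ k"
    using p[of k] beta_pos[of k] delta_nonneg[of k] by (simp add: algebra_simps)
  also have "\<dots> \<le> \<beta> $ k" using p[of k] beta_pos[of k] by (simp add: mult_left_le)
  finally have growth: "(\<beta> $ k - \<delta> $ k - \<beta> $ k * p t $ k) * p t $ k \<le> \<beta> $ k" .
  have "(\<Sum>j\<in>UNIV - {k}. M t k j * (p t $ j - p t $ k)) \<le> (\<Sum>j\<in>UNIV - {k}. \<bar>K\<bar>)"
  proof (rule sum_mono)
    fix j assume "j \<in> UNIV - {k}"
    then have "0 \<le> M t k j" "M t k j \<le> \<bar>K\<bar>"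
      using M_nonneg[OF assms, of k j] order_trans[OF M_le[OF assms, of k j] abs_ge_self] by auto
    moreover have "p t $ j - p t $ k \<le> 1" using p[of j] p[of k] by simp
    ultimately have "M t k j * (p t $ j - p t $ k) \<le> M t k j" by (simp add: mult_left_le)
    then show "M t k j * (p t $ j - p t $ k) \<le> \<bar>K\<bar>" using \<open>M t k j \<le> \<bar>K\<bar>\<close> by linarith
  qed
  also have "\<dots> \<le> (\<Sum>j\<in>(UNIV::'n set). \<bar>K\<bar>)" by (rule sum_mono2) auto
  finally show ?thesis using growth by (simp add: sis_field_def)
qed

lemma sis_field_ge:
  assumes "0 \<le> t" "k \<noteq> i"
  shows "M t i k * p t $ k - (\<delta> $ i + CARD('n) * \<bar>K\<bar>) * p t $ i \<le> sis_field \<beta> \<delta> (M t) (p t) i"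
proof -
  have p: "0 \<le> p t $ j" "p t $ j \<le> 1" for j using p_nonneg p_le_1 assms by auto
  have growth: "- (\<delta> $ i * p t $ i) \<le> (\<beta> $ i - \<delta> $ i - \<beta> $ i * p t $ i) * p t $ i"
    using p[of i] beta_pos[of i] by (simp add: algebra_simps mult_left_le)
  have "M t i k * p t $ k \<le> (\<Sum>j\<in>UNIV - {i}. M t i j * p t $ j)"
    using assms M_nonneg p by (intro member_le_sum mult_nonneg_nonneg) auto
  moreover have "(\<Sum>j\<in>UNIV - {i}. M t i j) * p t $ i \<le> CARD('n) * \<bar>K\<bar> * p t $ i"
  proof (rule mult_right_mono[OF _ p(1)])
    have "(\<Sum>j\<in>UNIV - {i}. M t i j) \<le> (\<Sum>j\<in>UNIV - {i}. \<bar>K\<bar>)"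
      using order_trans[OF M_le[OF assms(1), of i] abs_ge_self] by (intro sum_mono) auto
    also have "\<dots> \<le> (\<Sum>j\<in>(UNIV::'n set). \<bar>K\<bar>)" by (rule sum_mono2) auto
    finally show "(\<Sum>j\<in>UNIV - {i}. M t i j) \<le> CARD('n) * \<bar>K\<bar>" by simp
  qed
  moreover have "(\<Sum>j\<in>UNIV - {i}. M t i j * (p t $ j - p t $ i))
      = (\<Sum>j\<in>UNIV - {i}. M t i j * p t $ j) - (\<Sum>j\<in>UNIV - {i}. M t i j) * p t $ i"
    by (simp add: right_diff_distrib sum_subtractf sum_distrib_right)
  ultimately show ?thesis using growth by (simp add: sis_field_def algebra_simps)
qed

lemma tendsto_zero_along_edge:
  assumes lim: "((\<lambda>t. p t $ i) \<longlongrightarrow> 0) at_top" and "k \<noteq> i" "0 < \<gamma>"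
    and rate: "\<And>t. 0 \<le> t \<Longrightarrow> \<gamma> \<le> M t i k"
  shows "((\<lambda>t. p t $ k) \<longlongrightarrow> 0) at_top"
proof (rule tendsto_zero_of_forcing[OF p_deriv p_deriv p_nonneg p_nonneg _ sis_field_le \<open>0 < \<gamma>\<close> _ _ lim])
  fix t :: real assume "0 \<le> t"
  have "\<gamma> * p t $ k \<le> M t i k * p t $ k" using rate[OF \<open>0 \<le> t\<close>] p_nonneg[OF \<open>0 \<le> t\<close>] by (rule mult_right_mono)
  then show "\<gamma> * p t $ k - (\<delta> $ i + CARD('n) * \<bar>K\<bar>) * p t $ i \<le> sis_field \<beta> \<delta> (M t) (p t) i"
    using sis_field_ge[OF \<open>0 \<le> t\<close> \<open>k \<noteq> i\<close>] by linarith
qed (use beta_pos delta_nonneg in \<open>auto intro: add_nonneg_nonneg add_pos_nonneg\<close>)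

lemma tendsto_zero_along_path:
  assumes "(k, i) \<in> {(k, i). k \<noteq> i \<and> (\<exists>\<gamma>>0. \<forall>t\<ge>0. \<gamma> \<le> M t i k)}\<^sup>+"
    and "((\<lambda>t. p t $ i) \<longlongrightarrow> 0) at_top"
  shows "((\<lambda>t. p t $ k) \<longlongrightarrow> 0) at_top"
  using assms by (induction rule: converse_trancl_induct) (auto intro: tendsto_zero_along_edge)

end

theorem lemma1:
  fixes Q :: "real^'n^'n" and \<beta> \<delta> :: "real^'n"
    and p x :: "real \<Rightarrow> real^'n"
  assumes n2: "CARD('n) \<ge> 2"
    and gen: "generator_matrix Q"
    and irr: "irreducible_matrix Q"
    and beta_pos: "\<forall>i. \<beta> $ i > 0"
    and delta_nonneg: "\<forall>i. \<delta> $ i \<ge> 0"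
    and p_ode: "\<forall>t\<ge>0. (p has_vector_derivative
                  ((diag_mat \<beta> - diag_mat \<delta> - L_mat Q (x t)) *v p t
                   - (diag_mat (p t) ** diag_mat \<beta>) *v p t)) (at t within {0..})"
    and x_ode: "\<forall>t\<ge>0. (x has_vector_derivative (transpose Q *v x t)) (at t within {0..})"
    and p0: "\<forall>i. 0 \<le> p 0 $ i \<and> p 0 $ i \<le> 1"
    and x0: "\<forall>i. 0 < x 0 $ i \<and> x 0 $ i < 1"
    and x0_sum: "(\<Sum>i\<in>UNIV. x 0 $ i) = 1"
    and lim_i: "\<exists>i. ((\<lambda>t. p t $ i) \<longlongrightarrow> 0) at_top"
  shows "(p \<longlongrightarrow> 0) at_top"
proof -
  interpret irreducible_forward_equation Q x
    using gen x_ode irr x0 by unfold_locales (auto simp: less_imp_le)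
  obtain K where K: "\<And>t i j. 0 \<le> t \<Longrightarrow> i \<noteq> j \<Longrightarrow> migration_rate Q (x t) i j \<le> K"
    using migration_rate_bounded by blast
  interpret sis_system \<beta> \<delta> "\<lambda>t. migration_rate Q (x t)" K p
  proof
    fix i and t :: real assume "0 \<le> t"
    show "((\<lambda>t. p t $ i) has_real_derivative sis_field \<beta> \<delta> (migration_rate Q (x t)) (p t) i)
        (at t within {0..})"
      using has_vector_derivative_vec_nth[OF p_ode[rule_format, OF \<open>0 \<le> t\<close>], of i]
      by (simp only: sis_field_L_mat)
  qed (use migration_rate_nonneg K beta_pos delta_nonneg p0 in auto)
  have paths: "(k, i) \<in> {(k, i). k \<noteq> i \<and> (\<exists>\<gamma>>0. \<forall>t\<ge>0. \<gamma> \<le> migration_rate Q (x t) i k)}\<^sup>+"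
    if "k \<noteq> i" for k i
  proof (rule trancl_mono)
    show "(k, i) \<in> {(k, i). k \<noteq> i \<and> Q $ k $ i \<noteq> 0}\<^sup>+"
      using irr that unfolding irreducible_matrix_def by blast
  qed (use migration_rate_lower_bound in blast)
  obtain i\<^sub>0 where lim\<^sub>0: "((\<lambda>t. p t $ i\<^sub>0) \<longlongrightarrow> 0) at_top" using lim_i by blast
  have "((\<lambda>t. p t $ k) \<longlongrightarrow> 0) at_top" for k
  proof (cases "k = i\<^sub>0")
    case False
    show ?thesis using tendsto_zero_along_path[OF paths[OF False] lim\<^sub>0] .
  qed (use lim\<^sub>0 in simp)
  then show ?thesis by (intro vec_tendstoI) simp
qed

end
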